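(* Let $k,h,d\in\mathbb{P}$ and let $b_1,\dots,b_k\in\mathbb{P}$. Let $A=(a,ha+db_1,\dots,ha+db_k)$ with $\gcd(A)=1$ and $\gcd(a,d)=1$, and put $B=(b_1,\dots,b_k)$. Then for every $0\le r\le a-1$, $$N_{dr}=\min\{\,O_B(ma+r)\cdot ha+(ma+r)d \;:\; m\in\mathbb{N}\,\}.$$
   Context: $\mathbb{N}=\{0,1,2,\dots\}$, $\mathbb{P}=\{1,2,\dots\}$. For $A=(a,c_1,\dots,c_k)$ of positive integers with $\gcd(A)=1$ and an integer $r$, $N_r$ denotes the least nonnegative integer $a_0$ with $a_0\equiv r \pmod a$ that can be written as $a_0=\sum_{i=1}^k c_ix_i$ with all $x_i\in\mathbb{N}$ (so $N_r$ depends only on $r \bmod a$). For $B=(b_1,\dots,b_k)$ and an integer $M$, $O_B(M)=\min\{\sum_{i=1}^k x_i : \sum_{i=1}^k b_ix_i=M,\ x_i\in\mathbb{N}\}$ (taken to be $+\infty$ if there is no such representation). *)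

theory Defs
  imports Main "HOL-Library.Extended_Nat"
begin

definition representable :: "nat list \<Rightarrow> nat \<Rightarrow> bool" where
  "representable cs n \<longleftrightarrow>
     (\<exists>xs::nat list. length xs = length cs \<and> n = (\<Sum>i<length cs. cs ! i * xs ! i))"

text \<open>N_r for A = (a, c_1, ..., c_k): least nonnegative a0 with a0 = r (mod a)
  representable by the c_i.\<close>
definition N_val :: "nat \<Rightarrow> nat list \<Rightarrow> int \<Rightarrow> nat" where
  "N_val a cs r = (LEAST n::nat. int n mod int a = r mod int a \<and> representable cs n)"

text \<open>O_B(M): minimal number of summands, infinity if no representation.\<close>
definition O_B :: "nat list \<Rightarrow> int \<Rightarrow> enat" where
  "O_B bs M = (INF xs \<in> {xs::nat list. length xs = length bs \<and>
        (\<Sum>i<length bs. int (bs ! i * xs ! i)) = M}. enat (sum_list xs))"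

end

theory Submission
  imports Defs "HOL-Number_Theory.Cong"
begin

(* Writing c_i = h a + d b_i, a representation sum x_i c_i equals h a |x| + d M with
   M = sum x_i b_i.  As gcd(a, d) = 1, it is congruent to d r mod a exactly when M = m a + r
   for some m, and for fixed M it is smallest when |x| = O_B(M).  So N_{dr} is the minimum
   over m of O_B(m a + r) h a + (m a + r) d; the minimum is over a nonempty set because
   gcd(a, b_1, ..., b_k) divides gcd(A) = 1. *)

abbreviation weighted_sum :: "nat list \<Rightarrow> nat list \<Rightarrow> nat" where
  "weighted_sum bs xs \<equiv> \<Sum>i<length bs. bs ! i * xs ! i"

lemma weighted_sum_shifted:
  fixes c d :: nat
  assumes "length xs = length bs"
  shows "(\<Sum>i<length bs. map (\<lambda>b. c + d * b) bs ! i * xs ! i) = c * sum_list xs + d * weighted_sum bs xs"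
proof -
  have "(\<Sum>i<length bs. map (\<lambda>b. c + d * b) bs ! i * xs ! i)
          = (\<Sum>i<length bs. c * xs ! i + d * (bs ! i * xs ! i))"
    by (simp add: algebra_simps)
  also have "\<dots> = c * (\<Sum>i<length bs. xs ! i) + d * weighted_sum bs xs"
    by (simp add: sum.distrib sum_distrib_left)
  also have "(\<Sum>i<length bs. xs ! i) = sum_list xs"
    using assms by (simp add: sum_list_sum_nth atLeast0LessThan)
  finally show ?thesis .
qed

lemma representable_shifted_iff:
  fixes c d :: nat
  shows "representable (map (\<lambda>b. c + d * b) bs) n \<longleftrightarrow>
     (\<exists>xs. length xs = length bs \<and> n = c * sum_list xs + d * weighted_sum bs xs)"
  unfolding representable_def length_map
  by (intro ex_cong1 conj_cong refl) (simp_all only: weighted_sum_shifted)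

lemma O_B_nat_eq_INF:
  "O_B bs (int M) = (INF xs \<in> {xs. length xs = length bs \<and> weighted_sum bs xs = M}. enat (sum_list xs))"
  unfolding O_B_def by (simp only: of_nat_sum[symmetric] of_nat_eq_iff)

lemma O_B_le:
  assumes "length xs = length bs" and "weighted_sum bs xs = M"
  shows "O_B bs (int M) \<le> enat (sum_list xs)"
  unfolding O_B_nat_eq_INF using assms by (intro INF_lower) simp

lemma O_B_attained:
  assumes "O_B bs (int M) \<noteq> \<infinity>"
  obtains xs where "length xs = length bs" and "weighted_sum bs xs = M"
    and "O_B bs (int M) = enat (sum_list xs)"
proof -
  define S where "S = {xs. length xs = length bs \<and> weighted_sum bs xs = M}"
  have O_B_eq: "O_B bs (int M) = Inf ((\<lambda>xs. enat (sum_list xs)) ` S)"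
    unfolding O_B_nat_eq_INF S_def ..
  have "S \<noteq> {}"
    using assms unfolding O_B_eq by (metis INF_empty top_enat_def)
  then have "O_B bs (int M) \<in> (\<lambda>xs. enat (sum_list xs)) ` S"
    unfolding O_B_eq Inf_enat_def by (auto intro: LeastI)
  then show ?thesis
    using that unfolding S_def by blast
qed

lemma Gcd_dvd_Gcd_shifted:
  fixes a h d :: nat
  shows "Gcd (insert a (set bs)) dvd Gcd (set (a # map (\<lambda>b. h * a + d * b) bs))"
proof (rule Gcd_greatest)
  fix y assume "y \<in> set (a # map (\<lambda>b. h * a + d * b) bs)"
  then consider "y = a" | b where "b \<in> set bs" and "y = h * a + d * b"
    by auto
  then show "Gcd (insert a (set bs)) dvd y"
  proof cases
    case 2
    have "Gcd (insert a (set bs)) dvd a"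
      by (rule Gcd_dvd) simp
    moreover have "Gcd (insert a (set bs)) dvd b"
      using 2 by (intro Gcd_dvd insertI2)
    ultimately show ?thesis
      using 2 by simp
  qed simp
qed

lemma weighted_sum_hits_residue:
  fixes a :: nat and t :: int
  assumes "a > 0" and "int (Gcd (insert a (set bs))) dvd t"
  shows "\<exists>xs. length xs = length bs \<and> [int (weighted_sum bs xs) = t] (mod int a)"
  using assms(2)
proof (induction bs arbitrary: t)
  case Nil
  then have "[0 = t] (mod int a)"
    by (simp add: cong_0_iff cong_sym_eq[of 0])
  then show ?case
    by simp
next
  case (Cons b bs)
  define g where "g = Gcd (insert a (set bs))"
  have "Gcd (insert a (set (b # bs))) = gcd b g"
    unfolding g_def by (simp add: gcd.left_commute)
  with Cons.prems obtain k where t: "t = int (gcd b g) * k"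
    by (auto elim: dvdE)
  obtain u v where bezout: "u * int b + v * int g = int (gcd b g)"
    using bezout_int[of "int b" "int g"] by auto
  obtain xs where "length xs = length bs" and xs: "[int (weighted_sum bs xs) = k * v * int g] (mod int a)"
    using Cons.IH[of "k * v * int g"] unfolding g_def by auto
  define x where "x = nat ((k * u) mod int a)"
  have x: "[int x = k * u] (mod int a)"
    unfolding x_def cong_def using \<open>a > 0\<close> by simp
  have "weighted_sum (b # bs) (x # xs) = b * x + weighted_sum bs xs"
    unfolding length_Cons sum.lessThan_Suc_shift by simp
  then have "[int (weighted_sum (b # bs) (x # xs)) = int b * (k * u) + k * v * int g] (mod int a)"
    using x xs by (simp add: cong_add cong_scalar_left)
  also have "int b * (k * u) + k * v * int g = t"
    unfolding t bezout[symmetric] by (simp add: algebra_simps)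
  finally show ?case
    using \<open>length xs = length bs\<close> by (intro exI[of _ "x # xs"]) simp
qed

lemma cong_shifted_iff:
  fixes a d h s M r :: nat
  assumes "coprime a d"
  shows "[h * a * s + d * M = d * r] (mod a) \<longleftrightarrow> [M = r] (mod a)"
proof -
  have "[h * a * s + d * M = d * r] (mod a) \<longleftrightarrow> [d * M + h * s * a = d * r] (mod a)"
    by (simp add: ac_simps)
  also have "\<dots> \<longleftrightarrow> [d * M = d * r] (mod a)"
    unfolding cong_def by simp
  also have "\<dots> \<longleftrightarrow> [M = r] (mod a)"
    using assms by (simp add: cong_mult_lcancel_nat coprime_commute)
  finally show ?thesis .
qed

definition shifted_sums :: "nat \<Rightarrow> nat \<Rightarrow> nat \<Rightarrow> nat list \<Rightarrow> nat \<Rightarrow> nat set" where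
  "shifted_sums a h d bs r = {h * a * sum_list xs + d * weighted_sum bs xs | xs.
      length xs = length bs \<and> [weighted_sum bs xs = r] (mod a)}"

lemma mem_shifted_sums_iff:
  fixes a h d r :: nat
  assumes "coprime a d"
  shows "n \<in> shifted_sums a h d bs r \<longleftrightarrow>
           [n = d * r] (mod a) \<and> representable (map (\<lambda>b. h * a + d * b) bs) n"
proof
  assume "n \<in> shifted_sums a h d bs r"
  then obtain xs where len: "length xs = length bs" and M: "[weighted_sum bs xs = r] (mod a)"
    and n: "n = h * a * sum_list xs + d * weighted_sum bs xs"
    unfolding shifted_sums_def by blast
  have "[n = d * r] (mod a)"
    using M unfolding n cong_shifted_iff[OF assms] .
  moreover have "representable (map (\<lambda>b. h * a + d * b) bs) n"
    unfolding representable_shifted_iff using len n by blast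
  ultimately show "[n = d * r] (mod a) \<and> representable (map (\<lambda>b. h * a + d * b) bs) n" ..
next
  assume "[n = d * r] (mod a) \<and> representable (map (\<lambda>b. h * a + d * b) bs) n"
  then obtain xs where cong: "[n = d * r] (mod a)" and len: "length xs = length bs"
    and n: "n = h * a * sum_list xs + d * weighted_sum bs xs"
    unfolding representable_shifted_iff by blast
  have "[weighted_sum bs xs = r] (mod a)"
    using cong unfolding n cong_shifted_iff[OF assms] .
  then show "n \<in> shifted_sums a h d bs r"
    unfolding shifted_sums_def using len n by blast
qed

lemma N_val_shifted_eq_Least:
  fixes a h d r :: nat
  assumes "coprime a d"
  shows "N_val a (map (\<lambda>b. h * a + d * b) bs) (int (d * r)) = (LEAST n. n \<in> shifted_sums a h d bs r)"
proof -
  have "int n mod int a = int (d * r) mod int a \<longleftrightarrow> [n = d * r] (mod a)" for n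
    unfolding cong_def zmod_int[symmetric] of_nat_eq_iff by (rule refl)
  then show ?thesis
    unfolding N_val_def mem_shifted_sums_iff[OF assms] by simp
qed

lemma shifted_sums_nonempty:
  fixes a h d r :: nat
  assumes "a > 0" and "Gcd (insert a (set bs)) = 1"
  shows "shifted_sums a h d bs r \<noteq> {}"
proof -
  obtain xs where "length xs = length bs" and "[int (weighted_sum bs xs) = int r] (mod int a)"
    using weighted_sum_hits_residue[OF assms(1), of bs "int r"] assms(2) by auto
  then have "h * a * sum_list xs + d * weighted_sum bs xs \<in> shifted_sums a h d bs r"
    unfolding shifted_sums_def cong_int_iff by blast
  then show ?thesis
    by blast
qed

lemma Least_shifted_sums_le:
  fixes a h d r m :: nat
  assumes "h * a > 0"
  shows "enat (LEAST n. n \<in> shifted_sums a h d bs r)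
           \<le> O_B bs (int (m * a + r)) * enat (h * a) + enat ((m * a + r) * d)"
proof (cases "O_B bs (int (m * a + r)) = \<infinity>")
  case True
  then show ?thesis
    using assms by simp
next
  case False
  then obtain xs where len: "length xs = length bs" and M: "weighted_sum bs xs = m * a + r"
    and O_B_eq: "O_B bs (int (m * a + r)) = enat (sum_list xs)"
    by (rule O_B_attained)
  have "[m * a + r = r] (mod a)"
    by (simp add: cong_def)
  with len M have "h * a * sum_list xs + d * (m * a + r) \<in> shifted_sums a h d bs r"
    unfolding shifted_sums_def by (intro CollectI exI[of _ xs]) simp
  then have "(LEAST n. n \<in> shifted_sums a h d bs r) \<le> h * a * sum_list xs + d * (m * a + r)"
    by (rule Least_le)
  then show ?thesis
    unfolding O_B_eq by (simp add: algebra_simps)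
qed

lemma Least_shifted_sums_attained:
  fixes a h d r :: nat
  assumes "r < a" and "shifted_sums a h d bs r \<noteq> {}"
  obtains m where "O_B bs (int (m * a + r)) * enat (h * a) + enat ((m * a + r) * d)
                     \<le> enat (LEAST n. n \<in> shifted_sums a h d bs r)"
proof -
  have "(LEAST n. n \<in> shifted_sums a h d bs r) \<in> shifted_sums a h d bs r"
    using assms(2) by (meson LeastI_ex ex_in_conv)
  then obtain xs where len: "length xs = length bs" and "[weighted_sum bs xs = r] (mod a)"
    and least: "(LEAST n. n \<in> shifted_sums a h d bs r) = h * a * sum_list xs + d * weighted_sum bs xs"
    unfolding shifted_sums_def by blast
  then have "weighted_sum bs xs mod a = r"
    using assms(1) by (simp add: cong_def)
  define m where "m = weighted_sum bs xs div a"
  have M: "weighted_sum bs xs = m * a + r"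
    using div_mult_mod_eq[of "weighted_sum bs xs" a] \<open>weighted_sum bs xs mod a = r\<close>
    unfolding m_def by simp
  have "O_B bs (int (m * a + r)) \<le> enat (sum_list xs)"
    using len M by (rule O_B_le)
  then have "O_B bs (int (m * a + r)) * enat (h * a) + enat ((m * a + r) * d)
               \<le> enat (sum_list xs) * enat (h * a) + enat ((m * a + r) * d)"
    by (intro add_right_mono mult_right_mono) simp_all
  also have "\<dots> = enat (LEAST n. n \<in> shifted_sums a h d bs r)"
    unfolding least M by (simp add: algebra_simps)
  finally show ?thesis
    by (rule that)
qed

theorem mainTheorem1:
  fixes a h d :: nat and bs :: "nat list" and r :: nat
  assumes "a > 0" and "h > 0" and "d > 0"
    and "bs \<noteq> []" and "\<forall>b \<in> set bs. b > 0"
    and "Gcd (set (a # map (\<lambda>b. h * a + d * b) bs)) = 1"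
    and "coprime a d"
    and "r \<le> a - 1"
  shows "(\<exists>m::nat. enat (N_val a (map (\<lambda>b. h * a + d * b) bs) (int (d * r)))
              = O_B bs (int (m * a + r)) * enat (h * a) + enat ((m * a + r) * d))
       \<and> (\<forall>m::nat. enat (N_val a (map (\<lambda>b. h * a + d * b) bs) (int (d * r)))
              \<le> O_B bs (int (m * a + r)) * enat (h * a) + enat ((m * a + r) * d))"
proof -
  have "Gcd (insert a (set bs)) = 1"
    using Gcd_dvd_Gcd_shifted[of a bs h d] unfolding assms(6) by simp
  with assms(1) have nonempty: "shifted_sums a h d bs r \<noteq> {}"
    by (rule shifted_sums_nonempty)
  have "r < a"
    using assms(1,8) by simp
  then obtain m where attained: "O_B bs (int (m * a + r)) * enat (h * a) + enat ((m * a + r) * d)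
                                \<le> enat (LEAST n. n \<in> shifted_sums a h d bs r)"
    using nonempty by (rule Least_shifted_sums_attained)
  have minimal: "enat (LEAST n. n \<in> shifted_sums a h d bs r)
                 \<le> O_B bs (int (m * a + r)) * enat (h * a) + enat ((m * a + r) * d)" for m
    using assms(1,2) by (intro Least_shifted_sums_le) simp
  show ?thesis
    unfolding N_val_shifted_eq_Least[OF assms(7)] using attained minimal antisym by blast
qed

end
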